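(* Let $\gamma>0$ and let $u:(0,\infty)\to(0,\infty)$ be a stable function bounded from above by some $u^\infty>0$. For every $X=(x_1,\ldots,x_n)\in\mathbb R^{p\times n}$ with nonzero columns, there exists a unique $\hat\Delta\in\mathcal D_n^+$ such that $\hat\Delta=I^X(u(\hat\Delta))$, i.e. $\hat\Delta_i=\frac1nx_i^T\big(\frac1nXu(\hat\Delta)X^T+\gamma I_p\big)^{-1}x_i$ for all $i\in[n]$.
   Context: $u$ stable means $|u(x)-u(y)|\le\sqrt{\frac{u(x)u(y)}{xy}}|x-y|$ for all $x,y>0$ (equivalently $t\mapsto tu(t)$ non-decreasing and $t\mapsto u(t)/t$ non-increasing). $\mathcal D_n^+$ is the set of $n\times n$ diagonal matrices with positive diagonal entries, and $u(\Delta)$ is $u$ applied entrywise to the diagonal. $I^X(\Delta)=\mathrm{diag}\big(\frac1nx_i^T(\frac1nX\Delta X^T+\gamma I_p)^{-1}x_i\big)_i$. *)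

theory Defs
  imports "HOL-Analysis.Analysis"
begin

definition stable :: "(real \<Rightarrow> real) \<Rightarrow> bool" where
  "stable u \<longleftrightarrow> (\<forall>x>0. \<forall>y>0. \<bar>u x - u y\<bar> \<le> sqrt (u x * u y / (x * y)) * \<bar>x - y\<bar>)"

definition diag_mat :: "real ^ 'n \<Rightarrow> real ^ 'n ^ 'n" where
  "diag_mat d = (\<chi> i j. if i = j then d $ i else 0)"

definition vec_apply :: "(real \<Rightarrow> real) \<Rightarrow> real ^ 'n \<Rightarrow> real ^ 'n" where
  "vec_apply u d = (\<chi> i. u (d $ i))"

text \<open>I^X(Delta) for X a p x n matrix (columns x_i), Delta given by its diagonal d.\<close>
definition IX :: "real \<Rightarrow> real ^ 'n ^ 'p \<Rightarrow> real ^ 'n \<Rightarrow> real ^ 'n" where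
  "IX \<gamma> X d = (let n = real CARD('n);
     M = (1 / n) *\<^sub>R (X ** diag_mat d ** transpose X) + \<gamma> *\<^sub>R mat 1
   in (\<chi> i. (1 / n) * (column i X \<bullet> (matrix_inv M *v column i X))))"

end

theory Submission
  imports Defs
begin

text \<open>The map \<open>F d = I\<^sup>X(u(d))\<close> does not increase Thompson's metric on the positive
  orthant and strictly decreases it between distinct points. Stability of \<open>u\<close> guarantees
  that \<open>u(d)\<close> and \<open>u(e)\<close> agree within every factor \<open>l\<close> within which \<open>d\<close> and \<open>e\<close> agree.
  If \<open>u(e) \<le> l u(d)\<close>, the regularised scatter matrices satisfy
  \<open>M(u(e)) \<preceq> l M(u(d)) - (l - 1) \<gamma> I\<close>, and the variational formula
  \<open>x\<^sup>T M\<^sup>-\<^sup>1 x = max\<^sub>y (2 x\<^sup>T y - y\<^sup>T M y)\<close> turns this into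
  \<open>I\<^sup>X(u(d)) \<le> l I\<^sup>X(u(e))\<close>, strictly if \<open>l > 1\<close> thanks to the \<open>\<gamma> I\<close> term.
  Uniqueness follows by looking at the coordinate where two fixed points differ by the largest
  ratio. For existence, \<open>F\<close> maps the orthant into the box \<open>[I\<^sup>X(1) / U, I\<^sup>X(0)]\<close>,
  where \<open>U \<ge> max 1 u\<^sup>\<infinity>\<close>; the box is bounded away from zero, so non-expansiveness makes
  \<open>F\<close> Lipschitz on it and Brouwer's theorem applies.\<close>

lemma plus_inverse_le_iff:
  fixes l s :: real
  assumes "1 \<le> l" "0 < s"
  shows "s + 1/s \<le> l + 1/l \<longleftrightarrow> s \<le> l \<and> 1/s \<le> l"
proof -
  have diff: "l + 1/l - (s + 1/s) = (l - s) * (l - 1/s) / l"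
    using assms by (simp add: field_simps)
  show ?thesis
  proof
    assume "s + 1/s \<le> l + 1/l"
    then have "0 \<le> (l - s) * (l - 1/s) / l"
      using diff by linarith
    then have "0 \<le> (l - s) * (l - 1/s)"
      using assms by (simp add: zero_le_divide_iff)
    moreover have "1/s < l" if "l < s"
      using that assms by (smt (verit) divide_less_eq_1_pos)
    moreover have "s < l" if "l < 1/s"
      using that assms by (smt (verit) less_divide_eq_1_pos)
    ultimately show "s \<le> l \<and> 1/s \<le> l"
      by (smt (verit) mult_pos_neg mult_neg_pos)
  next
    assume "s \<le> l \<and> 1/s \<le> l"
    then show "s + 1/s \<le> l + 1/l"
      using diff assms by (smt (verit) divide_nonneg_pos mult_nonneg_nonneg)
  qed
qed

lemma stable_ratio_sum_le:
  assumes "stable u" "0 < x" "0 < y" "0 < u x" "0 < u y"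
  shows "u x / u y + u y / u x \<le> x / y + y / x"
proof -
  have "\<bar>u x - u y\<bar> \<le> sqrt (u x * u y / (x * y)) * \<bar>x - y\<bar>"
    using assms unfolding stable_def by blast
  then have "\<bar>u x - u y\<bar>\<^sup>2 \<le> (sqrt (u x * u y / (x * y)) * \<bar>x - y\<bar>)\<^sup>2"
    by (intro power_mono) auto
  then have "(u x - u y)\<^sup>2 / (u x * u y) \<le> (x - y)\<^sup>2 / (x * y)"
    using assms by (simp add: power_mult_distrib field_simps)
  moreover have "a / b + b / a = (a - b)\<^sup>2 / (a * b) + 2" if "0 < a" "0 < b" for a b :: real
    using that by (simp add: field_simps power2_eq_square)
  ultimately show ?thesis
    using assms by simp
qed

lemma stable_le_mult:
  assumes "stable u" "\<forall>t>0. 0 < u t" "0 < x" "0 < y" "x \<le> l * y" "y \<le> l * x"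
  shows "u x \<le> l * u y"
proof -
  have "0 < l"
    using assms by (smt (verit) mult_nonpos_nonneg)
  have l: "1 \<le> l"
  proof (rule ccontr)
    assume "\<not> 1 \<le> l"
    then have "l * y < y" "l * x < x"
      using assms by simp_all
    with assms show False by simp
  qed
  have "x / y + 1 / (x / y) \<le> l + 1/l"
    using plus_inverse_le_iff[OF l, of "x / y"] assms \<open>0 < l\<close> by (simp add: field_simps)
  then have "u x / u y + 1 / (u x / u y) \<le> l + 1/l"
    using stable_ratio_sum_le[OF assms(1,3,4)] assms by simp
  then have "u x / u y \<le> l"
    using plus_inverse_le_iff[OF l, of "u x / u y"] assms by simp
  then show ?thesis
    using assms by (simp add: field_simps)
qed

lemma matrix_inv_right:
  assumes "invertible A"
  shows "A ** matrix_inv A = mat 1"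
  using assms unfolding invertible_def matrix_inv_def by (metis (mono_tags, lifting) someI_ex)

lemma matrix_inv_mult_vector_right:
  assumes "invertible A"
  shows "A *v (matrix_inv A *v x) = x"
  by (simp add: matrix_vector_mul_assoc matrix_inv_right[OF assms])

lemma inner_matrix_vector_symmetric:
  fixes A :: "real ^ 'n ^ 'n"
  assumes "transpose A = A"
  shows "x \<bullet> (A *v y) = y \<bullet> (A *v x)"
  by (metis assms dot_lmul_matrix inner_commute vector_transpose_matrix)

lemma invertible_if_coercive:
  fixes A :: "real ^ 'n ^ 'n"
  assumes "0 < c" "\<forall>y. c * (y \<bullet> y) \<le> y \<bullet> (A *v y)"
  shows "invertible A"
  unfolding invertible_left_inverse matrix_left_invertible_ker
proof (intro allI impI)
  fix y
  assume "A *v y = 0"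
  then have "c * (y \<bullet> y) \<le> 0"
    using assms(2) by (metis inner_zero_right)
  with assms(1) show "y = 0"
    by (metis inner_eq_zero_iff inner_ge_zero mult_le_0_iff order_antisym not_le)
qed

lemma inverse_quadratic_form_ge:
  fixes A :: "real ^ 'n ^ 'n"
  assumes "transpose A = A" "invertible A" "\<forall>y. 0 \<le> y \<bullet> (A *v y)"
  shows "2 * (x \<bullet> y) - y \<bullet> (A *v y) \<le> x \<bullet> (matrix_inv A *v x)"
proof -
  define w where "w = matrix_inv A *v x"
  have Aw: "A *v w = x"
    unfolding w_def by (rule matrix_inv_mult_vector_right[OF assms(2)])
  have "0 \<le> (y - w) \<bullet> (A *v (y - w))"
    using assms(3) by blast
  also have "\<dots> = y \<bullet> (A *v y) - 2 * (x \<bullet> y) + x \<bullet> w"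
    using inner_matrix_vector_symmetric[OF assms(1), of w y]
    by (simp add: matrix_vector_mult_diff_distrib inner_diff_left inner_diff_right Aw inner_commute)
  finally show ?thesis
    unfolding w_def by simp
qed

lemma inverse_quadratic_form_antimono:
  fixes A B :: "real ^ 'n ^ 'n" and x :: "real ^ 'n"
  assumes "transpose B = B" "invertible A" "invertible B" "\<forall>y. 0 \<le> y \<bullet> (B *v y)" "0 < l"
    and BA: "\<forall>y. y \<bullet> (B *v y) + c * (y \<bullet> y) \<le> l * (y \<bullet> (A *v y))"
  defines "z \<equiv> matrix_inv A *v x"
  shows "x \<bullet> z + c / l * (z \<bullet> z) \<le> l * (x \<bullet> (matrix_inv B *v x))"
proof -
  have Az: "A *v z = x"
    unfolding z_def by (rule matrix_inv_mult_vector_right[OF assms(2)])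
  have "(z /\<^sub>R l) \<bullet> (B *v (z /\<^sub>R l)) = (z \<bullet> (B *v z)) / l\<^sup>2"
    by (simp add: matrix_vector_mult_scaleR power2_eq_square field_simps)
  also have "\<dots> \<le> (l * (x \<bullet> z) - c * (z \<bullet> z)) / l\<^sup>2"
    using BA[rule_format, of z] Az by (simp add: divide_right_mono inner_commute)
  finally have "2 * (x \<bullet> (z /\<^sub>R l)) - (l * (x \<bullet> z) - c * (z \<bullet> z)) / l\<^sup>2
      \<le> x \<bullet> (matrix_inv B *v x)"
    using inverse_quadratic_form_ge[OF assms(1,3,4), of x "z /\<^sub>R l"] by linarith
  then have "(x \<bullet> z + c / l * (z \<bullet> z)) / l \<le> x \<bullet> (matrix_inv B *v x)"
    using assms(5) by (simp add: field_simps power2_eq_square)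
  then show ?thesis
    using assms(5) by (simp add: field_simps)
qed

definition scatter :: "real \<Rightarrow> real ^ 'n ^ 'p \<Rightarrow> real ^ 'n \<Rightarrow> real ^ 'p ^ 'p" where
  "scatter \<gamma> X d = (1 / real CARD('n)) *\<^sub>R (X ** diag_mat d ** transpose X) + \<gamma> *\<^sub>R mat 1"

lemma IX_component:
  fixes X :: "real ^ 'n ^ 'p"
  shows "IX \<gamma> X d $ i = column i X \<bullet> (matrix_inv (scatter \<gamma> X d) *v column i X) / real CARD('n)"
  unfolding IX_def scatter_def Let_def by simp

lemma transpose_scatter:
  fixes X :: "real ^ 'n ^ 'p"
  shows "transpose (scatter \<gamma> X d) = scatter \<gamma> X d"
proof -
  have "transpose (diag_mat d) = diag_mat d"
    by (simp add: diag_mat_def transpose_def vec_eq_iff)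
  then have "transpose (X ** diag_mat d ** transpose X) = X ** diag_mat d ** transpose X"
    by (simp add: matrix_transpose_mul matrix_mul_assoc)
  moreover have "transpose (A + B) = transpose A + transpose B" for A B :: "real ^ 'p ^ 'p"
    by (simp add: transpose_def vec_eq_iff)
  ultimately show ?thesis
    by (simp add: scatter_def transpose_scalar)
qed

lemma inner_diag_mat: "w \<bullet> (diag_mat d *v w) = (\<Sum>i\<in>UNIV. d $ i * (w $ i)\<^sup>2)"
proof -
  have "diag_mat d *v w = (\<chi> i. d $ i * w $ i)"
    by (simp add: diag_mat_def matrix_vector_mult_def vec_eq_iff if_distrib[of "\<lambda>x. x * _"]
        cong: if_cong)
  then show ?thesis
    by (simp add: inner_vec_def power2_eq_square mult_ac)
qed

lemma quadratic_form_scatter: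
  fixes X :: "real ^ 'n ^ 'p"
  shows "y \<bullet> (scatter \<gamma> X d *v y)
    = (y v* X) \<bullet> (diag_mat d *v (y v* X)) / real CARD('n) + \<gamma> * (y \<bullet> y)"
proof -
  have "y \<bullet> ((X ** diag_mat d ** transpose X) *v y) = (y v* X) \<bullet> (diag_mat d *v (y v* X))"
    by (simp add: matrix_vector_mul_assoc[symmetric] dot_lmul_matrix[symmetric])
  then show ?thesis
    by (simp add: scatter_def matrix_vector_mult_add_rdistrib scaleR_matrix_vector_assoc[symmetric]
        inner_add_right)
qed

lemma scatter_coercive:
  assumes "\<forall>i. 0 \<le> d $ i"
  shows "\<gamma> * (y \<bullet> y) \<le> y \<bullet> (scatter \<gamma> X d *v y)"
  unfolding quadratic_form_scatter inner_diag_mat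
  using assms by (simp add: sum_nonneg)

lemma invertible_scatter:
  assumes "0 < \<gamma>" "\<forall>i. 0 \<le> d $ i"
  shows "invertible (scatter \<gamma> X d)"
  using invertible_if_coercive[OF assms(1)] scatter_coercive[OF assms(2)] by blast

lemma scatter_le_mult:
  fixes X :: "real ^ 'n ^ 'p"
  assumes "\<forall>i. e $ i \<le> l * d $ i"
  shows "y \<bullet> (scatter \<gamma> X e *v y) + (l - 1) * \<gamma> * (y \<bullet> y)
    \<le> l * (y \<bullet> (scatter \<gamma> X d *v y))"
proof -
  have "(\<Sum>i\<in>UNIV. e $ i * ((y v* X) $ i)\<^sup>2) \<le> l * (\<Sum>i\<in>UNIV. d $ i * ((y v* X) $ i)\<^sup>2)"
    unfolding sum_distrib_left using assms
    by (intro sum_mono) (metis mult.assoc mult_right_mono zero_le_power2)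
  then show ?thesis
    unfolding quadratic_form_scatter inner_diag_mat
    by (simp add: divide_right_mono algebra_simps add_divide_distrib[symmetric])
qed

lemma IX_le_mult:
  fixes X :: "real ^ 'n ^ 'p"
  assumes "0 < \<gamma>" "\<forall>i. 0 \<le> e $ i" "\<forall>i. e $ i \<le> l * d $ i" "1 \<le> l"
  shows "IX \<gamma> X d $ k \<le> l * IX \<gamma> X e $ k"
    and "1 < l \<Longrightarrow> column k X \<noteq> 0 \<Longrightarrow> IX \<gamma> X d $ k < l * IX \<gamma> X e $ k"
proof -
  have d: "\<forall>i. 0 \<le> d $ i"
    using assms(2-4) by (meson dual_order.trans order.strict_trans1 zero_less_one
        zero_le_mult_iff not_le)
  define x where "x = column k X"
  define z where "z = matrix_inv (scatter \<gamma> X d) *v x"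
  have psd: "\<forall>y. 0 \<le> y \<bullet> (scatter \<gamma> X e *v y)"
    using scatter_coercive[OF assms(2)] assms(1) by (meson inner_ge_zero order_trans
        mult_nonneg_nonneg less_imp_le)
  have "x \<bullet> z + (l - 1) * \<gamma> / l * (z \<bullet> z)
      \<le> l * (x \<bullet> (matrix_inv (scatter \<gamma> X e) *v x))"
    unfolding z_def
    using assms(1,4) scatter_le_mult[OF assms(3)] psd
    by (intro inverse_quadratic_form_antimono transpose_scatter invertible_scatter d assms(2)) auto
  then have "(x \<bullet> z + (l - 1) * \<gamma> / l * (z \<bullet> z)) / real CARD('n)
      \<le> l * (x \<bullet> (matrix_inv (scatter \<gamma> X e) *v x)) / real CARD('n)"
    by (simp add: divide_right_mono)
  then have key:
      "IX \<gamma> X d $ k + (l - 1) * \<gamma> / l * (z \<bullet> z) / real CARD('n) \<le> l * IX \<gamma> X e $ k"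
    unfolding IX_component x_def[symmetric] z_def[symmetric] by (simp add: add_divide_distrib)
  show "IX \<gamma> X d $ k \<le> l * IX \<gamma> X e $ k"
    using key assms(1,4) by (smt (verit) divide_nonneg_pos inner_ge_zero mult_nonneg_nonneg
        of_nat_0_less_iff zero_less_card_finite)
  assume "1 < l" "column k X \<noteq> 0"
  then have "z \<noteq> 0"
    using matrix_inv_mult_vector_right[OF invertible_scatter[OF assms(1) d]]
    unfolding z_def x_def by (metis matrix_vector_mult_0_right)
  then show "IX \<gamma> X d $ k < l * IX \<gamma> X e $ k"
    using key assms(1) \<open>1 < l\<close> by (smt (verit) divide_pos_pos inner_gt_zero_iff mult_pos_pos
        of_nat_0_less_iff zero_less_card_finite)
qed

lemma IX_pos:
  assumes "0 < \<gamma>" "\<forall>i. 0 \<le> d $ i" "column k X \<noteq> 0"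
  shows "0 < IX \<gamma> X d $ k"
proof -
  define z where "z = matrix_inv (scatter \<gamma> X d) *v column k X"
  have Mz: "scatter \<gamma> X d *v z = column k X"
    unfolding z_def by (rule matrix_inv_mult_vector_right[OF invertible_scatter[OF assms(1,2)]])
  then have "0 < z \<bullet> z"
    using assms(3) by auto
  moreover have "\<gamma> * (z \<bullet> z) \<le> column k X \<bullet> z"
    using scatter_coercive[OF assms(2), of \<gamma> z X] by (simp add: Mz inner_commute)
  ultimately show ?thesis
    unfolding IX_component z_def[symmetric] using assms(1)
    by (smt (verit) divide_pos_pos mult_pos_pos of_nat_0_less_iff zero_less_card_finite)
qed

lemma IX_mem_cbox:
  assumes "0 < \<gamma>" "1 \<le> U" "\<forall>i. 0 \<le> d $ i \<and> d $ i \<le> U"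
  shows "IX \<gamma> X d \<in> cbox ((1 / U) *\<^sub>R IX \<gamma> X 1) (IX \<gamma> X 0)"
proof -
  have "IX \<gamma> X 1 $ i \<le> U * IX \<gamma> X d $ i" for i
    using assms by (intro IX_le_mult(1)) auto
  moreover have "IX \<gamma> X d $ i \<le> 1 * IX \<gamma> X 0 $ i" for i
    using assms by (intro IX_le_mult(1)) auto
  ultimately show ?thesis
    using assms(2) by (simp add: mem_box_cart field_simps)
qed

text \<open>\<open>within_factor l d e\<close> says that the Thompson distance between the positive vectors
  \<open>d\<close> and \<open>e\<close> is at most \<open>ln l\<close>.\<close>

definition within_factor :: "real \<Rightarrow> real ^ 'n \<Rightarrow> real ^ 'n \<Rightarrow> bool" where
  "within_factor l d e \<longleftrightarrow> (\<forall>i. d $ i \<le> l * e $ i \<and> e $ i \<le> l * d $ i)"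

lemma within_factor_commute: "within_factor l d e \<longleftrightarrow> within_factor l e d"
  unfolding within_factor_def by blast

lemma within_factor_vec_apply:
  assumes "stable u" "\<forall>t>0. 0 < u t" "\<forall>i. 0 < d $ i" "\<forall>i. 0 < e $ i" "within_factor l d e"
  shows "within_factor l (vec_apply u d) (vec_apply u e)"
  using assms stable_le_mult[OF assms(1,2)] unfolding within_factor_def vec_apply_def by simp

lemma IX_within_factor:
  assumes "0 < \<gamma>" "\<forall>i. 0 \<le> d $ i" "\<forall>i. 0 \<le> e $ i" "within_factor l d e" "1 \<le> l"
  shows "within_factor l (IX \<gamma> X d) (IX \<gamma> X e)"
proof -
  have "\<forall>i. e $ i \<le> l * d $ i" "\<forall>i. d $ i \<le> l * e $ i"
    using assms(4) unfolding within_factor_def by auto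
  then show ?thesis
    unfolding within_factor_def using assms(2,3,5) by (auto intro!: IX_le_mult(1)[OF assms(1)])
qed

lemma within_factor_dist:
  assumes "0 < c" "\<forall>i. c \<le> d $ i" "\<forall>i. c \<le> e $ i"
  shows "within_factor (1 + dist d e / c) d e"
  unfolding within_factor_def
proof
  fix i
  have "\<bar>d $ i - e $ i\<bar> \<le> dist d e"
    by (metis dist_norm component_le_norm_cart vector_minus_component)
  moreover have "dist d e \<le> dist d e / c * d $ i" "dist d e \<le> dist d e / c * e $ i"
    using assms by (simp_all add: le_divide_eq mult_left_mono)
  ultimately show "d $ i \<le> (1 + dist d e / c) * e $ i \<and> e $ i \<le> (1 + dist d e / c) * d $ i"
    using assms(1) by (auto simp: algebra_simps abs_le_iff)
qed

lemma within_factor_abs_diff_le: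
  assumes "within_factor l d e" "1 \<le> l"
  shows "\<bar>d $ i - e $ i\<bar> \<le> (l - 1) * max (d $ i) (e $ i)"
proof -
  have "(l - 1) * d $ i \<le> (l - 1) * max (d $ i) (e $ i)"
    "(l - 1) * e $ i \<le> (l - 1) * max (d $ i) (e $ i)"
    using assms(2) by (simp_all add: mult_left_mono)
  moreover have "d $ i - e $ i \<le> (l - 1) * e $ i" "e $ i - d $ i \<le> (l - 1) * d $ i"
    using assms(1) unfolding within_factor_def by (simp_all add: algebra_simps)
  ultimately show ?thesis
    unfolding abs_le_iff by linarith
qed

lemma continuous_on_if_within_factor:
  fixes f :: "real ^ 'n \<Rightarrow> real ^ 'm"
  assumes c: "0 < c" "\<forall>d\<in>S. \<forall>i. c \<le> d $ i" and B: "\<forall>d\<in>S. \<forall>i. f d $ i \<le> B"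
    and f: "\<forall>d\<in>S. \<forall>e\<in>S. \<forall>l\<ge>1.
      within_factor l d e \<longrightarrow> within_factor l (f d) (f e)"
  shows "continuous_on S f"
proof (rule lipschitz_on_continuous_on)
  show "(real CARD('m) * \<bar>B\<bar> / c)-lipschitz_on S f"
  proof (rule lipschitz_onI)
    fix d e
    assume "d \<in> S" "e \<in> S"
    define l where "l = 1 + dist d e / c"
    have l: "1 \<le> l"
      unfolding l_def using c(1) by simp
    have fde: "within_factor l (f d) (f e)"
      using f within_factor_dist[of c d e] c \<open>d \<in> S\<close> \<open>e \<in> S\<close> l unfolding l_def by simp
    have comp: "\<bar>(f d - f e) $ i\<bar> \<le> (l - 1) * \<bar>B\<bar>" for i
    proof -
      have "max (f d $ i) (f e $ i) \<le> B"
        using B \<open>d \<in> S\<close> \<open>e \<in> S\<close> by simp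
      then have "max (f d $ i) (f e $ i) \<le> \<bar>B\<bar>"
        by (rule order_trans) simp
      then have "(l - 1) * max (f d $ i) (f e $ i) \<le> (l - 1) * \<bar>B\<bar>"
        using l by (simp add: mult_left_mono)
      then show ?thesis
        using within_factor_abs_diff_le[OF fde l, of i] by simp
    qed
    have "(\<Sum>i\<in>UNIV. \<bar>(f d - f e) $ i\<bar>) \<le> (\<Sum>i\<in>(UNIV :: 'm set). (l - 1) * \<bar>B\<bar>)"
      by (intro sum_mono comp)
    then have "dist (f d) (f e) \<le> (\<Sum>i\<in>(UNIV :: 'm set). (l - 1) * \<bar>B\<bar>)"
      unfolding dist_norm using norm_le_l1_cart order_trans by blast
    then show "dist (f d) (f e) \<le> real CARD('m) * \<bar>B\<bar> / c * dist d e"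
      unfolding l_def by (simp add: mult_ac)
  qed (use c(1) in simp)
qed

lemma fixed_point_exists_if_within_factor:
  fixes f :: "real ^ 'n \<Rightarrow> real ^ 'n"
  assumes "\<forall>i. 0 < a $ i" "cbox a b \<noteq> {}" "\<forall>d\<in>cbox a b. f d \<in> cbox a b"
    and "\<forall>d\<in>cbox a b. \<forall>e\<in>cbox a b. \<forall>l\<ge>1.
      within_factor l d e \<longrightarrow> within_factor l (f d) (f e)"
  shows "\<exists>d\<in>cbox a b. f d = d"
proof (rule brouwer)
  define c where "c = Min (range (($) a))"
  have "0 < c"
    unfolding c_def using assms(1) by simp
  moreover have "\<forall>d\<in>cbox a b. \<forall>i. c \<le> d $ i"
  proof (intro ballI allI)
    fix d i
    assume "d \<in> cbox a b"
    have "c \<le> a $ i"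
      unfolding c_def by simp
    also have "a $ i \<le> d $ i"
      using \<open>d \<in> cbox a b\<close> by (simp add: mem_box_cart)
    finally show "c \<le> d $ i" .
  qed
  moreover have "\<forall>d\<in>cbox a b. \<forall>i. f d $ i \<le> Max (range (($) b))"
  proof (intro ballI allI)
    fix d i
    assume "d \<in> cbox a b"
    then have "f d $ i \<le> b $ i"
      using assms(3) by (simp add: mem_box_cart)
    also have "b $ i \<le> Max (range (($) b))"
      by simp
    finally show "f d $ i \<le> Max (range (($) b))" .
  qed
  ultimately show "continuous_on (cbox a b) f"
    using assms(4) by (rule continuous_on_if_within_factor)
qed (use assms in auto)

lemma positive_fixed_point_exists:
  fixes f :: "real ^ 'n \<Rightarrow> real ^ 'n"
  assumes a: "\<forall>i. 0 < a $ i" and into: "\<And>d. \<forall>i. 0 < d $ i \<Longrightarrow> f d \<in> cbox a b"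
    and nonexp: "\<And>d e l. \<forall>i. 0 < d $ i \<Longrightarrow> \<forall>i. 0 < e $ i \<Longrightarrow> 1 \<le> l \<Longrightarrow>
      within_factor l d e \<Longrightarrow> within_factor l (f d) (f e)"
  shows "\<exists>d. (\<forall>i. 0 < d $ i) \<and> f d = d"
proof -
  have pos: "\<forall>i. 0 < d $ i" if "d \<in> cbox a b" for d
    using that a by (meson mem_box_cart less_le_trans)
  have "cbox a b \<noteq> {}"
    using into[of 1] by auto
  moreover have "\<forall>d\<in>cbox a b. f d \<in> cbox a b"
    using into pos by blast
  moreover have "\<forall>d\<in>cbox a b. \<forall>e\<in>cbox a b. \<forall>l\<ge>1.
      within_factor l d e \<longrightarrow> within_factor l (f d) (f e)"
    using nonexp pos by blast
  ultimately obtain d where "d \<in> cbox a b" "f d = d"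
    using fixed_point_exists_if_within_factor[OF a] by blast
  then show ?thesis
    using pos by blast
qed

lemma positive_fixed_point_unique:
  fixes f :: "real ^ 'n \<Rightarrow> real ^ 'n"
  assumes contracts: "\<And>d e l. \<forall>i. 0 < d $ i \<Longrightarrow> \<forall>i. 0 < e $ i \<Longrightarrow> 1 < l \<Longrightarrow>
      within_factor l d e \<Longrightarrow> \<forall>i. f d $ i < l * f e $ i"
    and d: "\<forall>i. 0 < d $ i" "f d = d" and e: "\<forall>i. 0 < e $ i" "f e = e"
  shows "d = e"
proof -
  define l where "l = Max (range (\<lambda>i. max (d $ i / e $ i) (e $ i / d $ i)))"
  have ratio_le: "max (d $ i / e $ i) (e $ i / d $ i) \<le> l" for i
    unfolding l_def by (rule Max_ge) auto
  then have "within_factor l d e"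
    using d e unfolding within_factor_def by (simp add: divide_le_eq)
  show "d = e"
  proof (cases "l \<le> 1")
    case True
    have shrink: "l * x \<le> x" if "0 < x" for x
      using True that by (metis less_imp_le mult_right_mono mult_1)
    have "d $ i = e $ i" for i
      using \<open>within_factor l d e\<close> shrink[of "d $ i"] shrink[of "e $ i"] d(1) e(1)
      unfolding within_factor_def by (meson order_antisym order_trans)
    then show ?thesis
      by (simp add: vec_eq_iff)
  next
    case False
    then have "d $ i < l * e $ i \<and> e $ i < l * d $ i" for i
      using contracts[OF d(1) e(1)] contracts[OF e(1) d(1)] \<open>within_factor l d e\<close>
      by (simp add: d(2) e(2) within_factor_commute)
    then have "max (d $ i / e $ i) (e $ i / d $ i) < l" for i
      using d e by (simp add: divide_less_eq)
    then have "Max (range (\<lambda>i. max (d $ i / e $ i) (e $ i / d $ i))) < l"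
      by (subst Max_less_iff) auto
    then show ?thesis
      unfolding l_def by simp
  qed
qed

lemma IX_vec_apply_within_factor:
  assumes "0 < \<gamma>" "stable u" "\<forall>t>0. 0 < u t" "\<forall>i. 0 < d $ i" "\<forall>i. 0 < e $ i"
    and "1 \<le> l" "within_factor l d e"
  shows "within_factor l (IX \<gamma> X (vec_apply u d)) (IX \<gamma> X (vec_apply u e))"
  using assms
  by (intro IX_within_factor within_factor_vec_apply) (auto simp: vec_apply_def less_imp_le)

lemma IX_vec_apply_less_mult:
  assumes "0 < \<gamma>" "stable u" "\<forall>t>0. 0 < u t" "\<forall>k. column k X \<noteq> 0"
    and "\<forall>i. 0 < d $ i" "\<forall>i. 0 < e $ i" "1 < l" "within_factor l d e"
  shows "\<forall>k. IX \<gamma> X (vec_apply u d) $ k < l * IX \<gamma> X (vec_apply u e) $ k"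
proof
  fix k
  have "\<forall>i. vec_apply u e $ i \<le> l * vec_apply u d $ i"
    using within_factor_vec_apply[OF assms(2,3,5,6,8)] unfolding within_factor_def by blast
  then show "IX \<gamma> X (vec_apply u d) $ k < l * IX \<gamma> X (vec_apply u e) $ k"
    using assms by (intro IX_le_mult(2)) (auto simp: vec_apply_def less_imp_le)
qed

theorem proposition3:
  fixes \<gamma> :: real and u :: "real \<Rightarrow> real" and X :: "real ^ 'n ^ 'p"
  assumes "\<gamma> > 0"
    and "\<forall>x>0. u x > 0"
    and "stable u"
    and "\<exists>u_inf>0. \<forall>x>0. u x \<le> u_inf"
    and "\<forall>i. column i X \<noteq> 0"
  shows "\<exists>!d :: real ^ 'n. (\<forall>i. d $ i > 0) \<and> d = IX \<gamma> X (vec_apply u d)"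
proof -
  obtain U where U: "1 \<le> U" "\<forall>t>0. u t \<le> U"
    using assms(4) by (meson max.cobounded1 max.cobounded2 order_trans)
  define a where "a = (1 / U) *\<^sub>R IX \<gamma> X 1"
  have a_pos: "\<forall>i. 0 < a $ i"
    using IX_pos[OF assms(1) _ assms(5)[rule_format]] U(1) by (simp add: a_def)
  have into_cbox: "IX \<gamma> X (vec_apply u d) \<in> cbox a (IX \<gamma> X 0)" if "\<forall>i. 0 < d $ i" for d
    unfolding a_def using that U assms(2)
    by (intro IX_mem_cbox assms(1)) (auto simp: vec_apply_def less_imp_le)
  obtain d where d: "\<forall>i. 0 < d $ i" "IX \<gamma> X (vec_apply u d) = d"
    using positive_fixed_point_exists[where f = "\<lambda>d. IX \<gamma> X (vec_apply u d)",
        OF a_pos into_cbox IX_vec_apply_within_factor[OF assms(1,3,2)]] by blast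
  show ?thesis
  proof (rule ex1I)
    show "(\<forall>i. 0 < d $ i) \<and> d = IX \<gamma> X (vec_apply u d)"
      using d by simp
    show "e = d" if e: "(\<forall>i. 0 < e $ i) \<and> e = IX \<gamma> X (vec_apply u e)" for e
      using positive_fixed_point_unique[where f = "\<lambda>d. IX \<gamma> X (vec_apply u d)",
          OF IX_vec_apply_less_mult[OF assms(1,3,2,5)] conjunct1[OF e] sym[OF conjunct2[OF e]] d] .
  qed
qed

end
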